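(* Let $\Omega\subset\mathbb{R}^n$ ($n\ge2$) be a bounded domain with Lipschitz boundary, $\gamma,\beta,\theta\in M_0(\Omega)$ with $\theta(x)\ge\gamma(x)+\beta(x)+\varepsilon_0$ a.e. for some $\varepsilon_0>0$, and let $p\in M_0(\Omega)$ with $p(x)\ge\theta(x)$ for a.e. $x\in\Omega$. Then $W^{1,p(x)}(\Omega)\subset S_{1,\gamma(x),\beta(x),\theta(x)}(\Omega)$.
   Context: $M_0(\Omega)$: measurable $p:\Omega\to[1,\infty]$ with $1\le p^-\le p(x)\le p^+<\infty$ a.e. $W^{1,p(x)}(\Omega)=\{u\in L^{p(x)}(\Omega):|\nabla u|\in L^{p(x)}(\Omega)\}$ (variable exponent Sobolev space). $D_i=\partial/\partial x_i$. $S_{1,\gamma(x),\beta(x),\theta(x)}(\Omega)=\{u\in L^1(\Omega):\int_\Omega|u|^{\theta(x)}dx+\sum_{i=1}^n\int_\Omega|u|^{\gamma(x)}|D_iu|^{\beta(x)}dx<\infty\}$. *)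

theory Defs
  imports "HOL-Analysis.Analysis"
begin

text \<open>Omega has Lipschitz boundary: near every boundary point, after a rigid
  change of coordinates (encoded by a unit direction nu), Omega is the region
  below the graph of a Lipschitz function g of the coordinates orthogonal to nu
  (g is constant along nu).\<close>
definition lipschitz_boundary :: "(real^'n) set \<Rightarrow> bool" where
  "lipschitz_boundary \<Omega> \<longleftrightarrow>
     (\<forall>x0\<in>frontier \<Omega>. \<exists>r>0. \<exists>\<nu>::real^'n. \<exists>g::real^'n \<Rightarrow> real. \<exists>L.
        norm \<nu> = 1 \<and> lipschitz_on L UNIV g \<and>
        (\<forall>y t. g (y + t *\<^sub>R \<nu>) = g y) \<and>
        \<Omega> \<inter> ball x0 r = {y \<in> ball x0 r. y \<bullet> \<nu> < g y})"

definition bounded_lipschitz_domain :: "(real^'n) set \<Rightarrow> bool" where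
  "bounded_lipschitz_domain \<Omega> \<longleftrightarrow>
     open \<Omega> \<and> connected \<Omega> \<and> \<Omega> \<noteq> {} \<and> bounded \<Omega> \<and> lipschitz_boundary \<Omega>"

definition M0 :: "(real^'n) set \<Rightarrow> ((real^'n) \<Rightarrow> real) set" where
  "M0 \<Omega> = {p. p \<in> borel_measurable (lebesgue_on \<Omega>) \<and>
               (AE x in lebesgue_on \<Omega>. 1 \<le> p x) \<and>
               (\<exists>P. AE x in lebesgue_on \<Omega>. p x \<le> P)}"

definition modular :: "(real^'n) set \<Rightarrow> ((real^'n) \<Rightarrow> real) \<Rightarrow> ((real^'n) \<Rightarrow> real) \<Rightarrow> ennreal" where
  "modular \<Omega> p u = (\<integral>\<^sup>+ x. ennreal (\<bar>u x\<bar> powr p x) \<partial>(lebesgue_on \<Omega>))"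

definition Lvar :: "(real^'n) set \<Rightarrow> ((real^'n) \<Rightarrow> real) \<Rightarrow> ((real^'n) \<Rightarrow> real) set" where
  "Lvar \<Omega> p = {u. u \<in> borel_measurable (lebesgue_on \<Omega>) \<and>
                 (\<exists>c>0. modular \<Omega> p (\<lambda>x. u x / c) < \<infinity>)}"

definition pderiv_i :: "'n \<Rightarrow> ((real^'n) \<Rightarrow> real) \<Rightarrow> (real^'n) \<Rightarrow> real" where
  "pderiv_i i f = (\<lambda>x. frechet_derivative f (at x) (axis i 1))"

fun iter_pderiv :: "'n list \<Rightarrow> ((real^'n) \<Rightarrow> real) \<Rightarrow> (real^'n) \<Rightarrow> real" where
  "iter_pderiv [] f = f"
| "iter_pderiv (i # is) f = pderiv_i i (iter_pderiv is f)"

definition smooth_fun :: "((real^'n) \<Rightarrow> real) \<Rightarrow> bool" where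
  "smooth_fun f \<longleftrightarrow> (\<forall>is. (\<forall>x. iter_pderiv is f differentiable (at x)) \<and>
                             continuous_on UNIV (iter_pderiv is f))"

definition test_fun :: "(real^'n) set \<Rightarrow> ((real^'n) \<Rightarrow> real) \<Rightarrow> bool" where
  "test_fun \<Omega> \<phi> \<longleftrightarrow> smooth_fun \<phi> \<and> compact (closure {x. \<phi> x \<noteq> 0}) \<and>
                      closure {x. \<phi> x \<noteq> 0} \<subseteq> \<Omega>"

definition locally_integrable :: "(real^'n) set \<Rightarrow> ((real^'n) \<Rightarrow> real) \<Rightarrow> bool" where
  "locally_integrable \<Omega> f \<longleftrightarrow>
     (\<forall>K. compact K \<and> K \<subseteq> \<Omega> \<longrightarrow> integrable (lebesgue_on K) f)"

definition weak_pderiv :: "(real^'n) set \<Rightarrow> 'n \<Rightarrow> ((real^'n) \<Rightarrow> real) \<Rightarrow> ((real^'n) \<Rightarrow> real) \<Rightarrow> bool" where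
  "weak_pderiv \<Omega> i u v \<longleftrightarrow> locally_integrable \<Omega> u \<and> locally_integrable \<Omega> v \<and>
     (\<forall>\<phi>. test_fun \<Omega> \<phi> \<longrightarrow>
        (\<integral>x. u x * pderiv_i i \<phi> x \<partial>(lebesgue_on \<Omega>)) = - (\<integral>x. v x * \<phi> x \<partial>(lebesgue_on \<Omega>)))"

definition W1var :: "(real^'n) set \<Rightarrow> ((real^'n) \<Rightarrow> real) \<Rightarrow> ((real^'n) \<Rightarrow> real) set" where
  "W1var \<Omega> p = {u. u \<in> Lvar \<Omega> p \<and>
      (\<exists>Du::'n \<Rightarrow> (real^'n) \<Rightarrow> real. (\<forall>i. weak_pderiv \<Omega> i u (Du i)) \<and>
          (\<lambda>x. norm (\<chi> i. Du i x)) \<in> Lvar \<Omega> p)}"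

definition S_space :: "(real^'n) set \<Rightarrow> ((real^'n) \<Rightarrow> real) \<Rightarrow> ((real^'n) \<Rightarrow> real)
                        \<Rightarrow> ((real^'n) \<Rightarrow> real) \<Rightarrow> ((real^'n) \<Rightarrow> real) set" where
  "S_space \<Omega> \<gamma> \<beta> \<theta> = {u. integrable (lebesgue_on \<Omega>) u \<and>
      (\<exists>Du::'n \<Rightarrow> (real^'n) \<Rightarrow> real. (\<forall>i. weak_pderiv \<Omega> i u (Du i)) \<and>
         (\<integral>\<^sup>+ x. ennreal (\<bar>u x\<bar> powr \<theta> x) \<partial>(lebesgue_on \<Omega>))
         + (\<Sum>i\<in>UNIV. \<integral>\<^sup>+ x. ennreal (\<bar>u x\<bar> powr \<gamma> x * \<bar>Du i x\<bar> powr \<beta> x) \<partial>(lebesgue_on \<Omega>))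
         < \<infinity>)}"

end

theory Submission
  imports Defs
begin

text \<open>Since \<open>\<theta> \<le> p\<close> and \<open>\<gamma> + \<beta> < \<theta>\<close>, every integrand in the definition of
  \<open>S\<^sub>1\<^sub>,\<^sub>\<gamma>\<^sub>,\<^sub>\<beta>\<^sub>,\<^sub>\<theta>\<close>, as well as \<open>|u|\<close> itself, is bounded pointwise by
  \<open>1 + |u|\<^sup>p + |\<nabla>u|\<^sup>p\<close>: a power below \<open>p\<close> of a number at most 1 is at most 1, and of a
  larger number is at most its \<open>p\<close>-th power; for the mixed terms one compares both factors
  with the larger of \<open>|u|\<close> and \<open>|\<nabla>u|\<close>. The dominating function is integrable because
  \<open>\<Omega>\<close> has finite measure and \<open>u, |\<nabla>u| \<in> L\<^sup>p\<^sup>(\<^sup>x\<^sup>)\<close> with bounded \<open>p\<close>.\<close>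

lemma powr_le_one_plus_powr:
  fixes a e q :: real
  assumes "0 \<le> a" "0 \<le> e" "e \<le> q"
  shows "a powr e \<le> 1 + a powr q"
proof (cases "a \<le> 1")
  case True
  then have "a powr e \<le> 1 powr e" using assms by (intro powr_mono2) auto
  then show ?thesis by (simp add: add_increasing2)
next
  case False
  then have "a powr e \<le> a powr q" using assms by (intro powr_mono) auto
  then show ?thesis by simp
qed

lemma powr_mult_powr_le_one_plus:
  fixes a b g h q :: real
  assumes "0 \<le> a" "0 \<le> b" "0 \<le> g" "0 \<le> h" "g + h \<le> q"
  shows "a powr g * b powr h \<le> 1 + a powr q + b powr q"
proof -
  define m where "m = max a b"
  have "a powr g * b powr h \<le> m powr g * m powr h"
    using assms by (intro mult_mono powr_mono2) (auto simp: m_def)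
  also have "\<dots> = m powr (g + h)" by (simp add: powr_add)
  also have "\<dots> \<le> 1 + m powr q"
    using assms by (intro powr_le_one_plus_powr) (auto simp: m_def)
  also have "\<dots> \<le> 1 + a powr q + b powr q"
    by (simp add: m_def max_def)
  finally show ?thesis .
qed

lemma powr_mult_powr_component_le_one_plus:
  fixes v :: "real^'n"
  assumes "0 \<le> g" "0 \<le> h" "g + h \<le> q"
  shows "\<bar>a\<bar> powr g * \<bar>v $ i\<bar> powr h \<le> 1 + \<bar>a\<bar> powr q + norm v powr q"
proof -
  have "\<bar>a\<bar> powr g * \<bar>v $ i\<bar> powr h \<le> \<bar>a\<bar> powr g * norm v powr h"
    using assms component_le_norm_cart[of v i] by (intro mult_left_mono powr_mono2) auto
  also have "\<dots> \<le> 1 + \<bar>a\<bar> powr q + norm v powr q"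
    using assms by (intro powr_mult_powr_le_one_plus) auto
  finally show ?thesis .
qed

lemma modular_finite_if_Lvar:
  assumes "u \<in> Lvar \<Omega> p"
    and "AE x in lebesgue_on \<Omega>. 0 \<le> p x" and "AE x in lebesgue_on \<Omega>. p x \<le> P"
    and [measurable]: "p \<in> borel_measurable (lebesgue_on \<Omega>)"
  shows "modular \<Omega> p u < \<infinity>"
proof -
  have [measurable]: "u \<in> borel_measurable (lebesgue_on \<Omega>)"
    using assms(1) by (simp add: Lvar_def)
  obtain c where "c > 0" and fin: "modular \<Omega> p (\<lambda>x. u x / c) < \<infinity>"
    using assms(1) by (auto simp: Lvar_def)
  define K where "K = 1 + c powr P"
  have "AE x in lebesgue_on \<Omega>.
      ennreal (\<bar>u x\<bar> powr p x) \<le> ennreal K * ennreal (\<bar>u x / c\<bar> powr p x)"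
    using assms(2,3)
  proof eventually_elim
    case (elim x)
    have "c powr p x \<le> 1 + c powr P"
      using \<open>c > 0\<close> elim powr_le_one_plus_powr[of c "p x" P] powr_mono[of "p x" P c]
      by (cases "c \<le> 1") (auto simp: add_increasing2)
    moreover have "\<bar>u x\<bar> powr p x = c powr p x * \<bar>u x / c\<bar> powr p x"
      using \<open>c > 0\<close> by (simp flip: powr_mult add: abs_divide)
    ultimately have "\<bar>u x\<bar> powr p x \<le> K * \<bar>u x / c\<bar> powr p x"
      by (simp add: K_def mult_right_mono)
    then show ?case
      by (metis K_def ennreal_leI ennreal_mult' powr_ge_zero add_nonneg_nonneg zero_le_one)
  qed
  then have "modular \<Omega> p u \<le> (\<integral>\<^sup>+ x. ennreal K * ennreal (\<bar>u x / c\<bar> powr p x) \<partial>lebesgue_on \<Omega>)"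
    unfolding modular_def by (rule nn_integral_mono_AE)
  also have "\<dots> = ennreal K * modular \<Omega> p (\<lambda>x. u x / c)"
    unfolding modular_def by (rule nn_integral_cmult) measurable
  also have "\<dots> < \<infinity>" using fin by (simp add: ennreal_mult_less_top)
  finally show ?thesis .
qed

lemma (in finite_measure) nn_integral_finite_if_le_one_plus:
  assumes [measurable]: "g \<in> borel_measurable M" "h \<in> borel_measurable M"
    and "\<And>x. 0 \<le> g x" "\<And>x. 0 \<le> h x"
    and "(\<integral>\<^sup>+ x. ennreal (g x) \<partial>M) < \<infinity>" "(\<integral>\<^sup>+ x. ennreal (h x) \<partial>M) < \<infinity>"
    and "AE x in M. f x \<le> 1 + g x + h x"
  shows "(\<integral>\<^sup>+ x. ennreal (f x) \<partial>M) < \<infinity>"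
proof -
  have "ennreal (f x) \<le> ennreal 1 + ennreal (g x) + ennreal (h x)"
    if "f x \<le> 1 + g x + h x" for x
  proof -
    have "ennreal (f x) \<le> ennreal (1 + g x + h x)" using that by (rule ennreal_leI)
    then show ?thesis using assms(3,4) by (simp add: ennreal_plus)
  qed
  then have "(\<integral>\<^sup>+ x. ennreal (f x) \<partial>M) \<le> (\<integral>\<^sup>+ x. ennreal 1 + ennreal (g x) + ennreal (h x) \<partial>M)"
    using assms(7) by (intro nn_integral_mono_AE) (auto elim!: eventually_mono)
  also have "\<dots> = emeasure M (space M) + (\<integral>\<^sup>+ x. ennreal (g x) \<partial>M) + (\<integral>\<^sup>+ x. ennreal (h x) \<partial>M)"
    by (simp add: nn_integral_add)
  also have "\<dots> < \<infinity>" using assms(5,6) by (simp add: less_top[symmetric])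
  finally show ?thesis .
qed

lemma nn_integral_finite_if_le_one_plus_modulars:
  assumes "\<Omega> \<in> lmeasurable" "p \<in> M0 \<Omega>" "u \<in> Lvar \<Omega> p" "v \<in> Lvar \<Omega> p"
    and "AE x in lebesgue_on \<Omega>. f x \<le> 1 + \<bar>u x\<bar> powr p x + \<bar>v x\<bar> powr p x"
  shows "(\<integral>\<^sup>+ x. ennreal (f x) \<partial>lebesgue_on \<Omega>) < \<infinity>"
proof -
  interpret finite_measure "lebesgue_on \<Omega>"
    using assms(1) by (rule finite_measure_lebesgue_on)
  obtain P where "AE x in lebesgue_on \<Omega>. p x \<le> P"
    using assms(2) by (auto simp: M0_def)
  moreover have "AE x in lebesgue_on \<Omega>. 0 \<le> p x"
    using assms(2) by (auto simp: M0_def elim: eventually_mono)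
  moreover have [measurable]: "p \<in> borel_measurable (lebesgue_on \<Omega>)"
    "u \<in> borel_measurable (lebesgue_on \<Omega>)" "v \<in> borel_measurable (lebesgue_on \<Omega>)"
    using assms(2-4) by (simp_all add: M0_def Lvar_def)
  ultimately have "modular \<Omega> p u < \<infinity>" "modular \<Omega> p v < \<infinity>"
    using assms(3,4) by (blast intro: modular_finite_if_Lvar)+
  note modulars_finite = this[unfolded modular_def]
  show ?thesis
    by (rule nn_integral_finite_if_le_one_plus[OF _ _ _ _ modulars_finite assms(5)]) simp_all
qed

theorem theorem3p5:
  fixes \<Omega> :: "(real^'n) set"
    and \<gamma> \<beta> \<theta> p :: "(real^'n) \<Rightarrow> real"
    and \<epsilon>0 :: real
  assumes "CARD('n) \<ge> 2"
    and "bounded_lipschitz_domain \<Omega>"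
    and "\<gamma> \<in> M0 \<Omega>" and "\<beta> \<in> M0 \<Omega>" and "\<theta> \<in> M0 \<Omega>"
    and "\<epsilon>0 > 0"
    and "AE x in lebesgue_on \<Omega>. \<theta> x \<ge> \<gamma> x + \<beta> x + \<epsilon>0"
    and "p \<in> M0 \<Omega>"
    and "AE x in lebesgue_on \<Omega>. p x \<ge> \<theta> x"
  shows "W1var \<Omega> p \<subseteq> S_space \<Omega> \<gamma> \<beta> \<theta>"
proof
  fix u assume "u \<in> W1var \<Omega> p"
  then obtain Du :: "'n \<Rightarrow> (real^'n) \<Rightarrow> real"
    where u: "u \<in> Lvar \<Omega> p" and Du: "\<forall>i. weak_pderiv \<Omega> i u (Du i)"
      and grad: "(\<lambda>x. norm (\<chi> i. Du i x)) \<in> Lvar \<Omega> p"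
    by (auto simp: W1var_def)
  have "\<Omega> \<in> lmeasurable"
    using assms(2) by (intro bounded_set_imp_lmeasurable) (auto simp: bounded_lipschitz_domain_def borel_open)
  note dominated = nn_integral_finite_if_le_one_plus_modulars[OF this assms(8) u grad]
  have "AE x in lebesgue_on \<Omega>. 1 \<le> \<gamma> x" "AE x in lebesgue_on \<Omega>. 1 \<le> \<beta> x"
      "AE x in lebesgue_on \<Omega>. 1 \<le> p x"
    using assms(3,4,8) by (simp_all add: M0_def)
  then have exponents: "AE x in lebesgue_on \<Omega>. 0 \<le> \<gamma> x \<and> 0 \<le> \<beta> x \<and> 0 \<le> \<theta> x \<and> 1 \<le> p x
      \<and> \<gamma> x + \<beta> x \<le> p x \<and> \<theta> x \<le> p x"
    using assms(7,9) by eventually_elim (use assms(6) in auto)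
  have "(\<integral>\<^sup>+ x. ennreal (norm (u x)) \<partial>lebesgue_on \<Omega>) < \<infinity>"
    using powr_le_one_plus_powr[of "\<bar>u x\<bar>" 1 "p x" for x]
    by (intro dominated eventually_mono[OF exponents]) (auto intro: add_increasing2)
  then have "integrable (lebesgue_on \<Omega>) u"
    using u by (intro integrableI_bounded) (simp_all add: Lvar_def)
  moreover have "(\<integral>\<^sup>+ x. ennreal (\<bar>u x\<bar> powr \<theta> x) \<partial>lebesgue_on \<Omega>) < \<infinity>"
    using powr_le_one_plus_powr[of "\<bar>u x\<bar>" "\<theta> x" "p x" for x]
    by (intro dominated eventually_mono[OF exponents]) (auto intro: add_increasing2)
  moreover have "(\<integral>\<^sup>+ x. ennreal (\<bar>u x\<bar> powr \<gamma> x * \<bar>Du i x\<bar> powr \<beta> x) \<partial>lebesgue_on \<Omega>) < \<infinity>" for i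
    using powr_mult_powr_component_le_one_plus[of "\<gamma> x" "\<beta> x" "p x" "u x" "\<chi> i. Du i x" i for x]
    by (intro dominated eventually_mono[OF exponents]) auto
  ultimately show "u \<in> S_space \<Omega> \<gamma> \<beta> \<theta>"
    using Du by (auto simp: S_space_def sum_Pinfty less_top)
qed

end
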